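(* Let $C$ be a configuration of the (substitution-based) Krivine Abstract Machine (KAM) and let $[\![\cdot]\!]$ be the translation of KAM configurations into HOcore described in the context. In the forward direction, if $C \to^{*} C'$, then $[\![C]\!] \Rightarrow [\![C']\!]$ (a sequence of zero or more $\tau$-transitions). In the backward direction, if $[\![C]\!] \Rightarrow P$, then there exists a configuration $C'$ such that $C \to^{*} C'$ and either (i) $P = [\![C']\!]$, or (ii) there exists $P'$ such that $P \xrightarrow{\tau} P' = [\![C']\!]$, or (iii) $C' = \langle \lambda x.t, [] \rangle$ for some $x,t$ and $P = hd(x).[\![t]\!] \parallel \overline{b}\langle 0\rangle$.
   Context: HOcore processes are given by $P,Q ::= a(x).P \mid \overline{a}\langle P\rangle \mid P \parallel Q \mid x \mid 0$, where $a,b,\dots$ are channel names and $x,y,\dots$ are process variables; $a(x).P$ binds $x$ in $P$; parallel composition is associative and commutative with unit $0$; processes are considered up to $\alpha$-conversion. The labelled transition system has labels $\tau$, $\overline{a}\langle P\rangle$ and $a(P)$, with rules: $\overline{a}\langle P\rangle \xrightarrow{\overline{a}\langle P\rangle} 0$; $a(x).Q \xrightarrow{a(P)} Q\{P/x\}$ (capture-avoiding substitution); if $P \xrightarrow{l} P'$ then $P\parallel Q \xrightarrow{l} P'\parallel Q$ and $Q \parallel P \xrightarrow{l} Q \parallel P'$; if $P \xrightarrow{\overline{a}\langle R\rangle} P'$ and $Q \xrightarrow{a(R)} Q'$ then $P \parallel Q \xrightarrow{\tau} P'\parallel Q'$ and $Q\parallel P \xrightarrow{\tau} Q' \parallel P'$.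 $\Rightarrow$ denotes the reflexive transitive closure of $\xrightarrow{\tau}$. KAM: terms $t,s ::= x \mid t\,s \mid \lambda x.t$; stacks $\pi ::= t :: \pi \mid []$; configurations $C ::= \langle t, \pi\rangle$, where all terms are closed. Transitions: $\langle t\,s, \pi\rangle \to \langle t, s :: \pi\rangle$ and $\langle \lambda x.t, s::\pi\rangle \to \langle t\{s/x\}, \pi\rangle$. $\to^*$ is the reflexive transitive closure. Translation (with $c, hd, b$ fixed channel names, $\lambda$-term variables translated as HOcore process variables, and $p$ a variable not occurring in translated entities): $[\![[]]\!] = \overline{b}\langle 0\rangle$; $[\![t::\pi]\!] = \overline{hd}\langle [\![t]\!]\rangle \parallel \overline{c}\langle [\![\pi]\!]\rangle$; $[\![\langle t,\pi\rangle]\!] = [\![t]\!] \parallel \overline{c}\langle[\![\pi]\!]\rangle$; $[\![t\,s]\!] = c(p).([\![t]\!] \parallel \overline{c}\langle \overline{hd}\langle[\![s]\!]\rangle \parallel \overline{c}\langle p\rangle\rangle)$; $[\![\lambda x.t]\!] = c(p).(hd(x).[\![t]\!] \parallel p)$; $[\![x]\!] = x$. *)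

theory Defs
  imports Main
begin

text \<open>Alpha-conversion is built in by using de Bruijn indices for process variables:
  PIn a P binds index 0 in P.  Channel names are strings.\<close>

type_synonym chan = string

datatype proc = PNil | PVar nat | PIn chan proc | POut chan proc | PPar proc proc

fun liftP :: "nat \<Rightarrow> proc \<Rightarrow> proc" where
  "liftP k PNil = PNil"
| "liftP k (PVar n) = PVar (if n < k then n else Suc n)"
| "liftP k (PIn a P) = PIn a (liftP (Suc k) P)"
| "liftP k (POut a P) = POut a (liftP k P)"
| "liftP k (PPar P Q) = PPar (liftP k P) (liftP k Q)"

fun substP :: "nat \<Rightarrow> proc \<Rightarrow> proc \<Rightarrow> proc" where
  "substP k R PNil = PNil"
| "substP k R (PVar n) = (if n < k then PVar n else if n = k then R else PVar (n - 1))"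
| "substP k R (PIn a P) = PIn a (substP (Suc k) (liftP 0 R) P)"
| "substP k R (POut a P) = POut a (substP k R P)"
| "substP k R (PPar P Q) = PPar (substP k R P) (substP k R Q)"

inductive scong :: "proc \<Rightarrow> proc \<Rightarrow> bool" (infix "\<equiv>\<^sub>s" 50) where
  sc_refl: "P \<equiv>\<^sub>s P"
| sc_sym: "P \<equiv>\<^sub>s Q \<Longrightarrow> Q \<equiv>\<^sub>s P"
| sc_trans: "P \<equiv>\<^sub>s Q \<Longrightarrow> Q \<equiv>\<^sub>s R \<Longrightarrow> P \<equiv>\<^sub>s R"
| sc_assoc: "PPar (PPar P Q) R \<equiv>\<^sub>s PPar P (PPar Q R)"
| sc_comm: "PPar P Q \<equiv>\<^sub>s PPar Q P"
| sc_unit: "PPar P PNil \<equiv>\<^sub>s P"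
| sc_in: "P \<equiv>\<^sub>s Q \<Longrightarrow> PIn a P \<equiv>\<^sub>s PIn a Q"
| sc_out: "P \<equiv>\<^sub>s Q \<Longrightarrow> POut a P \<equiv>\<^sub>s POut a Q"
| sc_par: "P \<equiv>\<^sub>s P' \<Longrightarrow> Q \<equiv>\<^sub>s Q' \<Longrightarrow> PPar P Q \<equiv>\<^sub>s PPar P' Q'"

datatype label = Tau | OutL chan proc | InL chan proc

fun label_eq :: "label \<Rightarrow> label \<Rightarrow> bool" where
  "label_eq Tau Tau = True"
| "label_eq (OutL a P) (OutL b Q) = (a = b \<and> P \<equiv>\<^sub>s Q)"
| "label_eq (InL a P) (InL b Q) = (a = b \<and> P \<equiv>\<^sub>s Q)"
| "label_eq _ _ = False"

text \<open>The labelled transition system on processes up to structural congruence: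
  the rules of the paper, plus closure under structural congruence of source,
  target and label (so that it is the LTS on congruence classes).\<close>
inductive ptrans :: "proc \<Rightarrow> label \<Rightarrow> proc \<Rightarrow> bool" where
  t_out: "ptrans (POut a P) (OutL a P) PNil"
| t_in: "ptrans (PIn a Q) (InL a P) (substP 0 P Q)"
| t_parL: "ptrans P l P' \<Longrightarrow> ptrans (PPar P Q) l (PPar P' Q)"
| t_parR: "ptrans P l P' \<Longrightarrow> ptrans (PPar Q P) l (PPar Q P')"
| t_comL: "ptrans P (OutL a R) P' \<Longrightarrow> ptrans Q (InL a R) Q' \<Longrightarrow> ptrans (PPar P Q) Tau (PPar P' Q')"
| t_comR: "ptrans P (OutL a R) P' \<Longrightarrow> ptrans Q (InL a R) Q' \<Longrightarrow> ptrans (PPar Q P) Tau (PPar Q' P')"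
| t_struct: "P \<equiv>\<^sub>s P1 \<Longrightarrow> ptrans P1 l1 P1' \<Longrightarrow> P1' \<equiv>\<^sub>s P' \<Longrightarrow> label_eq l1 l \<Longrightarrow> ptrans P l P'"

definition wtau :: "proc \<Rightarrow> proc \<Rightarrow> bool" where
  "wtau = (\<lambda>P Q. ptrans P Tau Q)\<^sup>*\<^sup>*"

datatype lterm = LVar nat | LApp lterm lterm | LLam lterm

fun liftT :: "nat \<Rightarrow> lterm \<Rightarrow> lterm" where
  "liftT k (LVar n) = LVar (if n < k then n else Suc n)"
| "liftT k (LApp t s) = LApp (liftT k t) (liftT k s)"
| "liftT k (LLam t) = LLam (liftT (Suc k) t)"

fun substT :: "nat \<Rightarrow> lterm \<Rightarrow> lterm \<Rightarrow> lterm" where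
  "substT k s (LVar n) = (if n < k then LVar n else if n = k then s else LVar (n - 1))"
| "substT k s (LApp t u) = LApp (substT k s t) (substT k s u)"
| "substT k s (LLam t) = LLam (substT (Suc k) (liftT 0 s) t)"

fun closedn :: "nat \<Rightarrow> lterm \<Rightarrow> bool" where
  "closedn k (LVar n) = (n < k)"
| "closedn k (LApp t s) = (closedn k t \<and> closedn k s)"
| "closedn k (LLam t) = closedn (Suc k) t"

abbreviation closed :: "lterm \<Rightarrow> bool" where "closed t \<equiv> closedn 0 t"

type_synonym stack = "lterm list"
type_synonym config = "lterm \<times> stack"

definition closed_config :: "config \<Rightarrow> bool" where
  "closed_config C = (closed (fst C) \<and> (\<forall>s\<in>set (snd C). closed s))"

inductive kam_step :: "config \<Rightarrow> config \<Rightarrow> bool" where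
  k_push: "kam_step (LApp t s, \<pi>) (t, s # \<pi>)"
| k_grab: "kam_step (LLam t, s # \<pi>) (substT 0 s t, \<pi>)"

abbreviation kam_steps :: "config \<Rightarrow> config \<Rightarrow> bool" where
  "kam_steps \<equiv> kam_step\<^sup>*\<^sup>*"

definition ch_c :: chan where "ch_c = ''c''"
definition ch_hd :: chan where "ch_hd = ''hd''"
definition ch_b :: chan where "ch_b = ''b''"

text \<open>De Bruijn rendering of the named translation: the auxiliary bound
  variable p (not occurring in translated entities) is a binder, so free
  indices of subterms are shifted past it.
  [t s] = c(p).([t] || c<hd<[s]> || c<p>>),  [\<lambda>x.t] = c(p).(hd(x).[t] || p).\<close>
fun trT :: "lterm \<Rightarrow> proc" where
  "trT (LVar n) = PVar n"
| "trT (LApp t s) = PIn ch_c (PPar (liftP 0 (trT t))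
      (POut ch_c (PPar (POut ch_hd (liftP 0 (trT s))) (POut ch_c (PVar 0)))))"
| "trT (LLam t) = PIn ch_c (PPar (PIn ch_hd (liftP 1 (trT t))) (PVar 0))"

fun trS :: "stack \<Rightarrow> proc" where
  "trS [] = POut ch_b PNil"
| "trS (t # \<pi>) = PPar (POut ch_hd (trT t)) (POut ch_c (trS \<pi>))"

fun trC :: "config \<Rightarrow> proc" where
  "trC (t, \<pi>) = PPar (trT t) (POut ch_c (trS \<pi>))"

end

theory Submission
  imports Defs "HOL-Library.Multiset"
begin

(* Structural congruence is decided by a normal form: up to associativity, commutativity and
   unit, a process is the multiset of its parallel components, each normalised recursively.
   On normal forms every transition consumes one top-level output and/or one top-level input, so
   a tau-step of a process with a single top-level input is a communication with that input.
   In the translation of <t s, pi> or <\<lambda>x.t, pi> the single input is on c and receives the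
   stack: this is the push step, respectively the move to the state hd(x).[t] || [pi] of a
   grab in progress; from that state the only tau-step is the rest of the grab, possible iff pi is
   nonempty. So every weak tau-derivative of [C] is, up to congruence, either [C'] or such a
   half-way state, for some C' reachable from C. *)

section \<open>Substitution\<close>

lemma substP_liftP: "substP k R (liftP k P) = P"
  by (induction P arbitrary: k R) auto

lemma liftP_liftP: "i \<le> j \<Longrightarrow> liftP (Suc j) (liftP i P) = liftP i (liftP j P)"
  by (induction P arbitrary: i j) auto

lemma liftP_substP:
  "i \<le> j \<Longrightarrow> substP (Suc j) (liftP i R) (liftP i P) = liftP i (substP j R P)"
proof (induction P arbitrary: i j R)
  case (PIn a P)
  then show ?case
    using PIn.IH[of "Suc i" "Suc j" "liftP 0 R"] liftP_liftP[of 0 i R] by simp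
qed auto

lemma trT_liftT: "trT (liftT k t) = liftP k (trT t)"
  by (induction t arbitrary: k) (simp_all add: liftP_liftP flip: One_nat_def)

lemma trT_substT: "trT (substT k s t) = substP k (trT s) (trT t)"
proof (induction t arbitrary: k s)
  case (LLam t)
  then show ?case
    using liftP_substP[of 1 "Suc k" "liftP 0 (trT s)" "trT t"] liftP_liftP[of 0 0 "trT s"]
    by (simp add: trT_liftT)
qed (simp_all add: liftP_substP)

lemma liftP_scong: "R \<equiv>\<^sub>s R' \<Longrightarrow> liftP k R \<equiv>\<^sub>s liftP k R'"
proof (induction arbitrary: k rule: scong.induct)
  case (sc_trans P Q R) then show ?case by (meson scong.sc_trans)
qed (auto intro: scong.intros)

lemma substP_scong_left: "R \<equiv>\<^sub>s R' \<Longrightarrow> substP k R Q \<equiv>\<^sub>s substP k R' Q"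
proof (induction Q arbitrary: k R R')
  case (PIn a Q) then show ?case by (simp add: sc_in liftP_scong)
qed (auto intro: scong.intros)

lemma substP_scong_right: "Q \<equiv>\<^sub>s Q' \<Longrightarrow> substP k R Q \<equiv>\<^sub>s substP k R Q'"
proof (induction arbitrary: k R rule: scong.induct)
  case (sc_trans P Q R) then show ?case by (meson scong.sc_trans)
qed (auto intro: scong.intros)

lemma substP_scong: "R \<equiv>\<^sub>s R' \<Longrightarrow> Q \<equiv>\<^sub>s Q' \<Longrightarrow> substP k R Q \<equiv>\<^sub>s substP k R' Q'"
  by (meson sc_trans substP_scong_left substP_scong_right)

section \<open>A normal form for structural congruence\<close>

declare sc_trans [trans]

lemma sc_parL: "P \<equiv>\<^sub>s P' \<Longrightarrow> PPar P Q \<equiv>\<^sub>s PPar P' Q"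
  by (simp add: sc_par sc_refl)

lemma sc_parR: "Q \<equiv>\<^sub>s Q' \<Longrightarrow> PPar P Q \<equiv>\<^sub>s PPar P Q'"
  by (simp add: sc_par sc_refl)

datatype nproc = NVar nat | NIn chan "nproc multiset" | NOut chan "nproc multiset"

fun nf :: "proc \<Rightarrow> nproc multiset" where
  "nf PNil = {#}"
| "nf (PVar n) = {#NVar n#}"
| "nf (PIn a P) = {#NIn a (nf P)#}"
| "nf (POut a P) = {#NOut a (nf P)#}"
| "nf (PPar P Q) = nf P + nf Q"

lemma nf_eq_if_scong: "P \<equiv>\<^sub>s Q \<Longrightarrow> nf P = nf Q"
  by (induction rule: scong.induct) (auto simp: ac_simps)

fun par_list :: "proc list \<Rightarrow> proc" where
  "par_list [] = PNil"
| "par_list (P # Ps) = PPar P (par_list Ps)"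

lemma par_list_append: "par_list (xs @ ys) \<equiv>\<^sub>s PPar (par_list xs) (par_list ys)"
proof (induction xs)
  case Nil
  have "PPar PNil (par_list ys) \<equiv>\<^sub>s par_list ys"
    using sc_comm sc_unit by (rule sc_trans)
  then show ?case by (simp add: sc_sym)
next
  case (Cons x xs)
  then have "par_list ((x # xs) @ ys) \<equiv>\<^sub>s PPar x (PPar (par_list xs) (par_list ys))"
    by (simp add: sc_parR)
  also have "\<dots> \<equiv>\<^sub>s PPar (par_list (x # xs)) (par_list ys)"
    by (simp add: sc_assoc sc_sym)
  finally show ?case .
qed

lemma par_list_move: "par_list (ys @ x # zs) \<equiv>\<^sub>s PPar x (par_list (ys @ zs))"
proof (induction ys)
  case Nil then show ?case by (simp add: sc_refl)
next
  case (Cons y ys)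
  let ?R = "par_list (ys @ zs)"
  have "par_list ((y # ys) @ x # zs) \<equiv>\<^sub>s PPar y (PPar x ?R)"
    using Cons by (simp add: sc_parR)
  also have "\<dots> \<equiv>\<^sub>s PPar (PPar y x) ?R" by (rule sc_sym, rule sc_assoc)
  also have "\<dots> \<equiv>\<^sub>s PPar (PPar x y) ?R" by (rule sc_parL, rule sc_comm)
  also have "\<dots> \<equiv>\<^sub>s PPar x (par_list ((y # ys) @ zs))" by (simp add: sc_assoc)
  finally show ?case .
qed

lemma par_list_perm: "mset xs = mset ys \<Longrightarrow> par_list xs \<equiv>\<^sub>s par_list ys"
proof (induction xs arbitrary: ys)
  case Nil then show ?case by (simp add: sc_refl)
next
  case (Cons x xs)
  then obtain ys1 ys2 where ys: "ys = ys1 @ x # ys2"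
    by (metis list.set_intros(1) set_mset_mset split_list)
  with Cons have "par_list (x # xs) \<equiv>\<^sub>s PPar x (par_list (ys1 @ ys2))"
    by (simp add: sc_parR)
  also have "\<dots> \<equiv>\<^sub>s par_list ys"
    unfolding ys by (rule sc_sym, rule par_list_move)
  finally show ?case .
qed

(* Any enumeration of M will do, by par_list_perm. *)
definition par_mset :: "proc multiset \<Rightarrow> proc" where
  "par_mset M = par_list (SOME xs. mset xs = M)"

lemma par_mset_scong: "mset xs = M \<Longrightarrow> par_mset M \<equiv>\<^sub>s par_list xs"
  unfolding par_mset_def by (metis (mono_tags, lifting) par_list_perm someI)

primrec of_nproc :: "nproc \<Rightarrow> proc" where
  "of_nproc (NVar n) = PVar n"
| "of_nproc (NIn a M) = PIn a (par_mset (image_mset of_nproc M))"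
| "of_nproc (NOut a M) = POut a (par_mset (image_mset of_nproc M))"

lemma par_mset_union: "par_mset (M + N) \<equiv>\<^sub>s PPar (par_mset M) (par_mset N)"
proof -
  obtain xs ys where xs: "mset xs = M" and ys: "mset ys = N" by (meson ex_mset)
  then have "par_mset (M + N) \<equiv>\<^sub>s par_list (xs @ ys)"
    by (simp add: par_mset_scong)
  also have "\<dots> \<equiv>\<^sub>s PPar (par_list xs) (par_list ys)"
    by (rule par_list_append)
  also have "\<dots> \<equiv>\<^sub>s PPar (par_mset M) (par_mset N)"
    using par_mset_scong[OF xs] par_mset_scong[OF ys] by (simp add: sc_par sc_sym)
  finally show ?thesis .
qed

lemma par_mset_single: "par_mset {#P#} \<equiv>\<^sub>s P"
proof -
  have "par_mset {#P#} \<equiv>\<^sub>s PPar P PNil"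
    using par_mset_scong[of "[P]"] by simp
  then show ?thesis using sc_unit by (rule sc_trans)
qed

lemma scong_of_nf: "P \<equiv>\<^sub>s par_mset (image_mset of_nproc (nf P))"
proof (induction P)
  case PNil
  show ?case using par_mset_scong[of "[]"] by (simp add: sc_sym)
next
  case (PVar n)
  show ?case using par_mset_single[of "PVar n"] by (simp add: sc_sym)
next
  case (PIn a P)
  then show ?case using par_mset_single[of "PIn a _"] by (simp, meson sc_in sc_sym sc_trans)
next
  case (POut a P)
  then show ?case using par_mset_single[of "POut a _"] by (simp, meson sc_out sc_sym sc_trans)
next
  case (PPar P Q)
  then show ?case using par_mset_union by (simp, meson sc_par sc_sym sc_trans)
qed

lemma scong_iff_nf_eq: "P \<equiv>\<^sub>s Q \<longleftrightarrow> nf P = nf Q"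
  by (metis nf_eq_if_scong scong_of_nf sc_sym sc_trans)

lemma nf_substP_cong:
  "nf R = nf R' \<Longrightarrow> nf Q = nf Q' \<Longrightarrow> nf (substP k R Q) = nf (substP k R' Q')"
  by (simp add: substP_scong flip: scong_iff_nf_eq)

section \<open>Transitions on normal forms\<close>

(* The output and input clauses only serve to carry the induction in ptrans_nf_trans through
   the communication rules. *)
fun nf_trans :: "proc \<Rightarrow> label \<Rightarrow> proc \<Rightarrow> bool" where
  "nf_trans P Tau P' \<longleftrightarrow> (\<exists>a R Q M.
     nf P = add_mset (NOut a (nf R)) (add_mset (NIn a (nf Q)) M) \<and> nf P' = nf (substP 0 R Q) + M)"
| "nf_trans P (OutL a R) P' \<longleftrightarrow> nf P = add_mset (NOut a (nf R)) (nf P')"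
| "nf_trans P (InL a R) P' \<longleftrightarrow> (\<exists>Q M.
     nf P = add_mset (NIn a (nf Q)) M \<and> nf P' = nf (substP 0 R Q) + M)"

lemma nf_trans_nf_cong:
  "nf_trans P l P' \<Longrightarrow> nf Q = nf P \<Longrightarrow> nf Q' = nf P' \<Longrightarrow> nf_trans Q l Q'"
  by (cases l) simp_all

lemma nf_trans_label_cong: "nf_trans P l P' \<Longrightarrow> label_eq l l' \<Longrightarrow> nf_trans P l' P'"
proof (cases l; cases l')
  fix a R b R'
  assume "nf_trans P l P'" "label_eq l l'" "l = InL a R" "l' = InL b R'"
  then obtain Q M where "nf P = add_mset (NIn a (nf Q)) M" "nf P' = nf (substP 0 R Q) + M"
    "a = b" "nf R = nf R'"
    by (auto simp: scong_iff_nf_eq)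
  then show "nf_trans P l' P'"
    using \<open>l' = InL b R'\<close> nf_substP_cong[of R R' Q Q 0] by auto
qed (auto simp: scong_iff_nf_eq)

lemma nf_trans_parL: "nf_trans P l P' \<Longrightarrow> nf_trans (PPar P Q) l (PPar P' Q)"
  by (cases l) fastforce+

lemma nf_trans_com:
  "nf_trans P (OutL a R) P' \<Longrightarrow> nf_trans Q (InL a R) Q' \<Longrightarrow> nf_trans (PPar P Q) Tau (PPar P' Q')"
  by fastforce

lemma ptrans_nf_trans: "ptrans P l P' \<Longrightarrow> nf_trans P l P'"
proof (induction rule: ptrans.induct)
  case (t_comL P a R P' Q Q')
  show ?case using t_comL.IH by (rule nf_trans_com)
next
  case (t_parR P l P' Q)
  show ?case
    using nf_trans_parL[OF t_parR.IH] by (rule nf_trans_nf_cong) (simp_all add: ac_simps)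
next
  case (t_comR P a R P' Q Q')
  show ?case
    using nf_trans_com[OF t_comR.IH] by (rule nf_trans_nf_cong) (simp_all add: ac_simps)
next
  case (t_struct P P1 l1 P1' P' l)
  then show ?case by (metis nf_trans_label_cong nf_trans_nf_cong scong_iff_nf_eq)
qed (auto simp: nf_trans_parL)

lemma ptrans_TauE:
  assumes "ptrans P Tau P'"
  obtains a R Q M where "nf P = add_mset (NOut a (nf R)) (add_mset (NIn a (nf Q)) M)"
    and "nf P' = nf (substP 0 R Q) + M"
  using ptrans_nf_trans[OF assms] by auto

lemma label_eq_refl: "label_eq l l"
  by (cases l) (simp_all add: sc_refl)

lemma ptrans_scong: "P \<equiv>\<^sub>s Q \<Longrightarrow> ptrans Q l Q' \<Longrightarrow> Q' \<equiv>\<^sub>s P' \<Longrightarrow> ptrans P l P'"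
  by (blast intro: t_struct label_eq_refl)

lemma Tau_PIn_POut_iff:
  "ptrans (PPar (PIn a Q) (POut b R)) Tau P' \<longleftrightarrow> a = b \<and> P' \<equiv>\<^sub>s substP 0 R Q"
proof
  assume "ptrans (PPar (PIn a Q) (POut b R)) Tau P'"
  then obtain c R' Q' M
    where "nf (PPar (PIn a Q) (POut b R)) = add_mset (NOut c (nf R')) (add_mset (NIn c (nf Q')) M)"
      and P': "nf P' = nf (substP 0 R' Q') + M"
    by (rule ptrans_TauE)
  from this(1) have "a = b" "nf R' = nf R" "nf Q' = nf Q" "M = {#}"
    by (auto simp: add_eq_conv_ex)
  with P' show "a = b \<and> P' \<equiv>\<^sub>s substP 0 R Q"
    using nf_substP_cong[of R' R Q' Q 0] by (simp add: scong_iff_nf_eq)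
next
  assume "a = b \<and> P' \<equiv>\<^sub>s substP 0 R Q"
  then show "ptrans (PPar (PIn a Q) (POut b R)) Tau P'"
    using ptrans_scong[OF sc_refl t_comR[OF t_out t_in] sc_trans[OF sc_unit]] by (metis sc_sym)
qed

lemma Tau_PIn_POut_POut_iff:
  assumes "a \<noteq> b"
  shows "ptrans (PPar (PIn a Q) (PPar (POut a R) (POut b S))) Tau P' \<longleftrightarrow>
    P' \<equiv>\<^sub>s PPar (substP 0 R Q) (POut b S)"
proof
  assume "ptrans (PPar (PIn a Q) (PPar (POut a R) (POut b S))) Tau P'"
  then obtain c R' Q' M
    where "nf (PPar (PIn a Q) (PPar (POut a R) (POut b S))) =
        add_mset (NOut c (nf R')) (add_mset (NIn c (nf Q')) M)"
      and P': "nf P' = nf (substP 0 R' Q') + M"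
    by (rule ptrans_TauE)
  with assms have "nf R' = nf R" "nf Q' = nf Q" "M = {#NOut b (nf S)#}"
    by (auto simp: add_eq_conv_ex)
  with P' show "P' \<equiv>\<^sub>s PPar (substP 0 R Q) (POut b S)"
    using nf_substP_cong[of R' R Q' Q 0] by (simp add: scong_iff_nf_eq)
next
  assume P': "P' \<equiv>\<^sub>s PPar (substP 0 R Q) (POut b S)"
  have "ptrans (PPar (PPar (PIn a Q) (POut a R)) (POut b S)) Tau
      (PPar (PPar (substP 0 R Q) PNil) (POut b S))"
    by (rule t_parL, rule t_comR[OF t_out t_in])
  moreover have "PPar (PPar (substP 0 R Q) PNil) (POut b S) \<equiv>\<^sub>s P'"
    using P' by (meson sc_parL sc_sym sc_trans sc_unit)
  ultimately show "ptrans (PPar (PIn a Q) (PPar (POut a R) (POut b S))) Tau P'"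
    by (rule ptrans_scong[OF sc_sym[OF sc_assoc]])
qed

lemma no_Tau_PVar_POut: "\<not> ptrans (PPar (PVar n) (POut a R)) Tau P'"
proof
  assume "ptrans (PPar (PVar n) (POut a R)) Tau P'"
  then obtain c R' Q' M
    where "nf (PPar (PVar n) (POut a R)) = add_mset (NOut c (nf R')) (add_mset (NIn c (nf Q')) M)"
    by (rule ptrans_TauE)
  then show False
    by (auto simp: add_eq_conv_ex)
qed

section \<open>Tau-steps of translated configurations\<close>

lemma chans_distinct: "ch_hd \<noteq> ch_c" "ch_hd \<noteq> ch_b"
  by (simp_all add: ch_c_def ch_hd_def ch_b_def)

(* A grab in progress: [\<lambda>u] has received the stack on c and waits for its argument on hd. *)
abbreviation trGrab :: "lterm \<Rightarrow> stack \<Rightarrow> proc" where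
  "trGrab u \<pi> \<equiv> PPar (PIn ch_hd (trT u)) (trS \<pi>)"

lemma no_Tau_trC_LVar: "\<not> ptrans (trC (LVar n, \<pi>)) Tau P'"
  by (simp add: no_Tau_PVar_POut)

lemma Tau_trC_LApp_iff: "ptrans (trC (LApp t s, \<pi>)) Tau P' \<longleftrightarrow> P' \<equiv>\<^sub>s trC (t, s # \<pi>)"
  by (simp add: Tau_PIn_POut_iff substP_liftP)

lemma Tau_trC_LLam_iff: "ptrans (trC (LLam u, \<pi>)) Tau P' \<longleftrightarrow> P' \<equiv>\<^sub>s trGrab u \<pi>"
  using substP_liftP[of 1 "liftP 0 (trS \<pi>)" "trT u"] by (simp add: Tau_PIn_POut_iff)

lemma Tau_trGrab_iff:
  "ptrans (trGrab u \<pi>) Tau P' \<longleftrightarrow> (\<exists>s \<pi>'. \<pi> = s # \<pi>' \<and> P' \<equiv>\<^sub>s trC (substT 0 s u, \<pi>'))"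
  by (cases \<pi>) (simp_all add: Tau_PIn_POut_iff Tau_PIn_POut_POut_iff chans_distinct trT_substT)

lemma Tau_trC_cases:
  assumes "ptrans (trC C) Tau P'"
  shows "(\<exists>C''. kam_step C C'' \<and> P' \<equiv>\<^sub>s trC C'') \<or> (\<exists>u \<pi>. C = (LLam u, \<pi>) \<and> P' \<equiv>\<^sub>s trGrab u \<pi>)"
proof -
  obtain t \<pi> where C: "C = (t, \<pi>)" by fastforce
  show ?thesis
  proof (cases t)
    case (LVar n)
    with assms C show ?thesis using no_Tau_trC_LVar by simp
  next
    case (LApp t1 s)
    have "P' \<equiv>\<^sub>s trC (t1, s # \<pi>)"
      using assms Tau_trC_LApp_iff unfolding C LApp by blast
    moreover have "kam_step C (t1, s # \<pi>)"
      unfolding C LApp by (rule kam_step.k_push)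
    ultimately show ?thesis by blast
  next
    case (LLam u)
    have "P' \<equiv>\<^sub>s trGrab u \<pi>"
      using assms Tau_trC_LLam_iff unfolding C LLam by blast
    then show ?thesis unfolding C LLam by blast
  qed
qed

lemma Tau_trGrab_Cons: "ptrans (trGrab u (s # \<pi>)) Tau (trC (substT 0 s u, \<pi>))"
  using Tau_trGrab_iff sc_refl by blast

lemma kam_step_wtau: "kam_step C C' \<Longrightarrow> wtau (trC C) (trC C')"
proof (induction rule: kam_step.induct)
  case (k_push t s \<pi>)
  show ?case
    unfolding wtau_def using Tau_trC_LApp_iff[THEN iffD2, OF sc_refl] by (rule r_into_rtranclp)
next
  case (k_grab u s \<pi>)
  have "ptrans (trC (LLam u, s # \<pi>)) Tau (trGrab u (s # \<pi>))"
    using Tau_trC_LLam_iff sc_refl by blast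
  moreover note Tau_trGrab_Cons
  ultimately show ?case
    unfolding wtau_def by (meson converse_rtranclp_into_rtranclp r_into_rtranclp)
qed

lemma kam_steps_wtau: "kam_steps C C' \<Longrightarrow> wtau (trC C) (trC C')"
  by (induction rule: rtranclp_induct)
    (auto simp: wtau_def dest: kam_step_wtau intro: rtranclp_trans)

definition kam_reachable_rep :: "config \<Rightarrow> proc \<Rightarrow> bool" where
  "kam_reachable_rep C P \<longleftrightarrow> (\<exists>C'. kam_steps C C' \<and>
     (P \<equiv>\<^sub>s trC C' \<or> (\<exists>u \<pi>. C' = (LLam u, \<pi>) \<and> P \<equiv>\<^sub>s trGrab u \<pi>)))"

lemma kam_reachable_rep_Tau:
  assumes rep: "kam_reachable_rep C P" and tau: "ptrans P Tau P'"
  shows "kam_reachable_rep C P'"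
proof -
  obtain C' where steps: "kam_steps C C'"
    and "P \<equiv>\<^sub>s trC C' \<or> (\<exists>u \<pi>. C' = (LLam u, \<pi>) \<and> P \<equiv>\<^sub>s trGrab u \<pi>)"
    using rep unfolding kam_reachable_rep_def by blast
  then consider (trC) "ptrans (trC C') Tau P'"
    | (grab) u \<pi> where "C' = (LLam u, \<pi>)" "ptrans (trGrab u \<pi>) Tau P'"
    using ptrans_scong[OF sc_sym tau sc_refl] by blast
  then show ?thesis
  proof cases
    case trC
    from Tau_trC_cases[OF trC] show ?thesis
    proof (elim disjE exE conjE)
      fix C'' assume "kam_step C' C''" "P' \<equiv>\<^sub>s trC C''"
      moreover from steps \<open>kam_step C' C''\<close> have "kam_steps C C''"
        by (rule rtranclp.rtrancl_into_rtrancl)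
      ultimately show ?thesis
        unfolding kam_reachable_rep_def by blast
    next
      fix u \<pi> assume "C' = (LLam u, \<pi>)" "P' \<equiv>\<^sub>s trGrab u \<pi>"
      with steps show ?thesis
        unfolding kam_reachable_rep_def by blast
    qed
  next
    case grab
    then obtain s \<pi>' where "\<pi> = s # \<pi>'" "P' \<equiv>\<^sub>s trC (substT 0 s u, \<pi>')"
      by (auto simp: Tau_trGrab_iff)
    moreover have "kam_step C' (substT 0 s u, \<pi>')"
      unfolding grab(1) \<open>\<pi> = s # \<pi>'\<close> by (rule kam_step.k_grab)
    with steps have "kam_steps C (substT 0 s u, \<pi>')"
      by (rule rtranclp.rtrancl_into_rtrancl)
    ultimately show ?thesis
      unfolding kam_reachable_rep_def by blast
  qed
qed

lemma wtau_kam_reachable_rep: "wtau (trC C) P \<Longrightarrow> kam_reachable_rep C P"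
  unfolding wtau_def
proof (induction rule: rtranclp_induct)
  case base
  show ?case unfolding kam_reachable_rep_def by (blast intro: sc_refl)
next
  case (step P P')
  then show ?case using kam_reachable_rep_Tau by blast
qed

lemma kam_reachable_rep_cases:
  assumes "kam_reachable_rep C P"
  shows "\<exists>C'. kam_steps C C' \<and>
    (P \<equiv>\<^sub>s trC C' \<or> (\<exists>P'. ptrans P Tau P' \<and> P' \<equiv>\<^sub>s trC C') \<or>
     (\<exists>u. C' = (LLam u, []) \<and> P \<equiv>\<^sub>s trGrab u []))"
proof -
  obtain C' where steps: "kam_steps C C'"
    and "P \<equiv>\<^sub>s trC C' \<or> (\<exists>u \<pi>. C' = (LLam u, \<pi>) \<and> P \<equiv>\<^sub>s trGrab u \<pi>)"
    using assms unfolding kam_reachable_rep_def by blast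
  then consider "P \<equiv>\<^sub>s trC C'" | u where "C' = (LLam u, [])" "P \<equiv>\<^sub>s trGrab u []"
    | u s \<pi> where "C' = (LLam u, s # \<pi>)" "P \<equiv>\<^sub>s trGrab u (s # \<pi>)"
    by (metis neq_Nil_conv)
  then show ?thesis
  proof cases
    case (3 u s \<pi>)
    have "ptrans P Tau (trC (substT 0 s u, \<pi>))"
      using 3(2) Tau_trGrab_Cons sc_refl by (rule ptrans_scong)
    moreover have "kam_step C' (substT 0 s u, \<pi>)"
      unfolding 3(1) by (rule kam_step.k_grab)
    with steps have "kam_steps C (substT 0 s u, \<pi>)"
      by (rule rtranclp.rtrancl_into_rtrancl)
    ultimately show ?thesis by (blast intro: sc_refl)
  qed (use steps in blast)+
qed

theorem theorem3p1:
  assumes "closed_config C"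
  shows "(\<forall>C'. kam_steps C C' \<longrightarrow> wtau (trC C) (trC C')) \<and>
         (\<forall>P. wtau (trC C) P \<longrightarrow>
            (\<exists>C'. kam_steps C C' \<and>
               (P \<equiv>\<^sub>s trC C'
                \<or> (\<exists>P'. ptrans P Tau P' \<and> P' \<equiv>\<^sub>s trC C')
                \<or> (\<exists>t. C' = (LLam t, []) \<and> P \<equiv>\<^sub>s PPar (PIn ch_hd (trT t)) (POut ch_b PNil)))))"
  using kam_steps_wtau kam_reachable_rep_cases[OF wtau_kam_reachable_rep]
  by (simp only: trS.simps(1)) blast

end
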